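(* For every real $u<1$ with $u\neq0$, $$\sum_{k=0}^\infty\frac{u^k}{2k+1}\left(\left(1-i\sqrt{1-u}\right)^{-2k-1}+\left(1+i\sqrt{1-u}\right)^{-2k-1}\right)=\frac{\operatorname{arctanh}\sqrt u}{\sqrt u}.$$
   Context: Here $i=\sqrt{-1}$ and $\sqrt{1-u}>0$. The right-hand side is the even function $\frac{\operatorname{arctanh}\sqrt u}{\sqrt u}=\sum_{k\ge0}\frac{u^k}{2k+1}$; for $0<u<1$ it is the real value with $\sqrt u>0$, and for $u<0$ it equals $\frac{\arctan\sqrt{|u|}}{\sqrt{|u|}}$. *)

theory Defs
  imports Complex_Main
begin

text \<open>Right-hand side: the real-valued function artanh(sqrt u)/sqrt u, read as
  arctan(sqrt |u|)/sqrt |u| for u < 0 (value 1 at u = 0, unused).\<close>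
definition artanh_ratio :: "real \<Rightarrow> real" where
  "artanh_ratio u =
     (if u > 0 then artanh (sqrt u) / sqrt u
      else if u < 0 then arctan (sqrt (- u)) / sqrt (- u)
      else 1)"

end

theory Submission
  imports Defs "HOL-Analysis.Analysis"
begin

text \<open>Put \<open>v\<^sup>2 = -u\<close>, \<open>a = 1 - \<i> \<surd>(1 - u)\<close>, \<open>b = 1 + \<i> \<surd>(1 - u)\<close>. The \<open>k\<close>-th term is
  \<open>(-1)\<^sup>k / (2k + 1) ((v/a)\<^bsup>2k+1\<^esup> + (v/b)\<^bsup>2k+1\<^esup>) / v\<close>, and \<open>|v| < |a| = |b|\<close>, so by the
  Taylor series of the arctangent the series sums to \<open>(Arctan (v/a) + Arctan (v/b)) / v\<close>.
  Since \<open>a + b = 2 = a b - v\<^sup>2\<close>, the addition formula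
  \<open>Arctan x + Arctan y = Arctan ((x + y) / (1 - x y))\<close> collapses the numerator to \<open>Arctan v\<close>.
  Choosing \<open>v = \<surd>(-u)\<close> for \<open>u < 0\<close> and \<open>v = \<i> \<surd>u\<close> for \<open>u > 0\<close> turns \<open>Arctan v / v\<close>
  into \<open>arctan \<surd>|u| / \<surd>|u|\<close> and \<open>artanh \<surd>u / \<surd>u\<close> respectively.\<close>

lemma Arctan_add:
  fixes x y :: complex
  assumes x: "norm x < 1" and y: "norm y < 1"
  shows "Arctan x + Arctan y = Arctan ((x + y) / (1 - x * y))"
proof -
  let ?m = "\<lambda>z. (1 - \<i> * z) / (1 + \<i> * z)"
  have "norm (x * y) < 1"
    using mult_strict_mono'[OF x y] by (simp add: norm_mult)
  then have nxy: "1 - x * y \<noteq> 0" by auto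
  have pos_x: "0 < Re (?m x)" and pos_y: "0 < Re (?m y)"
    using x y by (simp_all add: Re_complex_div_lemma)
  have "1 - \<i> * ((x + y) / (1 - x * y)) = (1 - \<i> * x) * (1 - \<i> * y) / (1 - x * y)"
    and "1 + \<i> * ((x + y) / (1 - x * y)) = (1 + \<i> * x) * (1 + \<i> * y) / (1 - x * y)"
    using nxy by (simp_all add: field_simps)
  then have "?m x * ?m y = ?m ((x + y) / (1 - x * y))"
    using nxy by simp
  moreover have "Ln (?m x * ?m y) = Ln (?m x) + Ln (?m y)"
    using Re_Ln_pos_lt_imp[OF pos_x] Re_Ln_pos_lt_imp[OF pos_y] pos_x pos_y
    by (intro Ln_times_simple) auto
  ultimately show ?thesis
    by (simp add: Arctan_def distrib_left)
qed

lemma Arctan_div_series: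
  fixes v a :: complex
  assumes "v \<noteq> 0" and "norm v < norm a"
  shows "(\<lambda>k. (- v\<^sup>2) ^ k / of_nat (2 * k + 1) * inverse (a ^ (2 * k + 1))) sums (Arctan (v / a) / v)"
proof -
  have "norm (v / a) < 1"
    using assms by (simp add: norm_divide divide_less_eq)
  then have "(\<lambda>k. (-1) ^ k / of_nat (2 * k + 1) * (v / a) ^ (2 * k + 1) / v) sums (Arctan (v / a) / v)"
    by (intro sums_divide Arctan_series(2))
  moreover have "(-1) ^ k / of_nat (2 * k + 1) * (v / a) ^ (2 * k + 1) / v
      = (- v\<^sup>2) ^ k / of_nat (2 * k + 1) * inverse (a ^ (2 * k + 1))" for k
  proof -
    have "(v / a) ^ (2 * k + 1) = v * ((v\<^sup>2) ^ k * inverse (a ^ (2 * k + 1)))"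
      unfolding power_divide power_add power_mult by (simp add: divide_inverse)
    then have "(v / a) ^ (2 * k + 1) / v = (v\<^sup>2) ^ k * inverse (a ^ (2 * k + 1))"
      using \<open>v \<noteq> 0\<close> by simp
    moreover have "(- v\<^sup>2) ^ k = (-1) ^ k * (v\<^sup>2) ^ k"
      by (metis mult_minus1 power_mult_distrib)
    ultimately show ?thesis
      by (simp only: times_divide_eq_right[symmetric]) (simp add: divide_inverse mult_ac)
  qed
  ultimately show ?thesis by simp
qed

lemma Arctan_div_series_conjugate_pair:
  fixes v c :: complex
  assumes "v \<noteq> 0" and "v\<^sup>2 = c\<^sup>2 - 1"
    and "norm v < norm (1 - \<i> * c)" and "norm v < norm (1 + \<i> * c)"
  shows "(\<lambda>k. (- v\<^sup>2) ^ k / of_nat (2 * k + 1) *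
            (inverse ((1 - \<i> * c) ^ (2 * k + 1)) + inverse ((1 + \<i> * c) ^ (2 * k + 1))))
         sums (Arctan v / v)"
proof -
  define a b where "a = 1 - \<i> * c" and "b = 1 + \<i> * c"
  have "a \<noteq> 0" "b \<noteq> 0"
    using assms(3,4) by (auto simp: a_def b_def)
  have "a * b - v\<^sup>2 = 2"
    using assms(2) by (simp add: a_def b_def algebra_simps power2_eq_square)
  moreover have "1 - v / a * (v / b) = (a * b - v\<^sup>2) / (a * b)"
    using \<open>a \<noteq> 0\<close> \<open>b \<noteq> 0\<close> by (simp add: field_simps power2_eq_square)
  moreover have "v / a + v / b = v * (a + b) / (a * b)"
    using \<open>a \<noteq> 0\<close> \<open>b \<noteq> 0\<close> by (simp add: field_simps)
  moreover have "a + b = 2"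
    by (simp add: a_def b_def)
  ultimately have "(v / a + v / b) / (1 - v / a * (v / b)) = v"
    using \<open>a \<noteq> 0\<close> \<open>b \<noteq> 0\<close> by simp
  then have "Arctan (v / a) + Arctan (v / b) = Arctan v"
    using assms(1,3,4) by (simp add: Arctan_add norm_divide divide_less_eq a_def b_def)
  moreover have "(\<lambda>k. (- v\<^sup>2) ^ k / of_nat (2 * k + 1) * inverse (a ^ (2 * k + 1))
                   + (- v\<^sup>2) ^ k / of_nat (2 * k + 1) * inverse (b ^ (2 * k + 1)))
      sums (Arctan (v / a) / v + Arctan (v / b) / v)"
    using assms(1,3,4) by (intro sums_add Arctan_div_series) (simp_all add: a_def b_def)
  ultimately have "(\<lambda>k. (- v\<^sup>2) ^ k / of_nat (2 * k + 1) *
      (inverse (a ^ (2 * k + 1)) + inverse (b ^ (2 * k + 1)))) sums (Arctan v / v)"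
    by (simp only: distrib_left flip: add_divide_distrib)
  then show ?thesis
    by (simp only: a_def b_def)
qed

lemma Arctan_i_times_of_real:
  fixes r :: real
  assumes "\<bar>r\<bar> < 1"
  shows "Arctan (\<i> * of_real r) = \<i> * of_real (artanh r)"
proof -
  have "(1 - \<i> * (\<i> * of_real r)) / (1 + \<i> * (\<i> * of_real r)) = of_real ((1 + r) / (1 - r))"
    by simp
  moreover have "Ln (of_real ((1 + r) / (1 - r))) = of_real (ln ((1 + r) / (1 - r)))"
    using assms by (intro Ln_of_real) simp
  ultimately show ?thesis
    by (simp add: Arctan_def artanh_def)
qed

lemma norm_one_plus_minus_i_times_of_real:
  fixes t :: real
  shows "norm (1 - \<i> * of_real t) = sqrt (1 + t\<^sup>2)" and "norm (1 + \<i> * of_real t) = sqrt (1 + t\<^sup>2)"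
  by (simp_all add: cmod_def)

lemma Arctan_div_series_sqrt_one_minus:
  fixes u :: real and v :: complex
  assumes "u < 1" and "v \<noteq> 0" and "v\<^sup>2 = - of_real u"
  shows "(\<lambda>k::nat. complex_of_real (u ^ k / (2 * real k + 1)) *
            (inverse ((1 - \<i> * complex_of_real (sqrt (1 - u))) ^ (2 * k + 1)) +
             inverse ((1 + \<i> * complex_of_real (sqrt (1 - u))) ^ (2 * k + 1))))
         sums (Arctan v / v)"
proof -
  define c where "c = complex_of_real (sqrt (1 - u))"
  have "v\<^sup>2 = c\<^sup>2 - 1"
    using assms by (simp add: c_def flip: of_real_power)
  have "(norm v)\<^sup>2 = \<bar>u\<bar>"
    using assms(3) by (metis norm_minus_cancel norm_of_real norm_power)
  then have "norm v < sqrt (2 - u)"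
    using assms(1) by (intro real_less_rsqrt) simp
  moreover have "norm (1 - \<i> * c) = sqrt (2 - u)" and "norm (1 + \<i> * c) = sqrt (2 - u)"
    using assms(1) by (simp_all add: c_def norm_one_plus_minus_i_times_of_real)
  moreover have "complex_of_real (u ^ k / (2 * real k + 1)) = (- v\<^sup>2) ^ k / of_nat (2 * k + 1)" for k
    using assms(3) by simp
  ultimately show ?thesis
    using Arctan_div_series_conjugate_pair[OF assms(2) \<open>v\<^sup>2 = c\<^sup>2 - 1\<close>] by (simp add: c_def)
qed

theorem lemma5p1:
  fixes u :: real
  assumes "u < 1" and "u \<noteq> 0"
  shows "(\<lambda>k::nat. complex_of_real (u ^ k / (2 * real k + 1)) *
            (inverse ((1 - \<i> * complex_of_real (sqrt (1 - u))) ^ (2 * k + 1)) +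
             inverse ((1 + \<i> * complex_of_real (sqrt (1 - u))) ^ (2 * k + 1))))
         sums complex_of_real (artanh_ratio u)"
proof (cases "u < 0")
  case True
  define r where "r = sqrt (- u)"
  have "0 < r"
    using True by (simp add: r_def)
  moreover have "(of_real r)\<^sup>2 = - complex_of_real u"
    using True by (simp add: r_def flip: of_real_power)
  moreover have "Arctan (of_real r) / of_real r = complex_of_real (artanh_ratio u)"
    using True by (simp add: artanh_ratio_def Arctan_of_real r_def)
  ultimately show ?thesis
    using Arctan_div_series_sqrt_one_minus[OF assms(1), of "of_real r"] by simp
next
  case False
  with assms(2) have "0 < u"
    by simp
  define r where "r = sqrt u"
  have "0 < r" and "r < 1"
    using \<open>0 < u\<close> assms(1) by (simp_all add: r_def)
  moreover have "(\<i> * of_real r)\<^sup>2 = - complex_of_real u"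
    using \<open>0 < u\<close> by (simp add: r_def power_mult_distrib flip: of_real_power)
  moreover have "Arctan (\<i> * of_real r) / (\<i> * of_real r) = complex_of_real (artanh_ratio u)"
    using \<open>0 < u\<close> \<open>r < 1\<close> by (simp add: Arctan_i_times_of_real artanh_ratio_def r_def)
  ultimately show ?thesis
    using Arctan_div_series_sqrt_one_minus[OF assms(1), of "\<i> * of_real r"] by simp
qed

end
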